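(* Let $G$ be a finite simple graph, $s\ge1$, $e_1,\dots,e_s$ edges of $G$ (repetitions allowed). Suppose $u=p_0,p_1,\dots,p_{2k+1}=v$ is an even-connection between $u$ and $v$ and $z=q_0,q_1,\dots,q_{2l+1}=w$ is an even-connection between $z$ and $w$, both with respect to $e_1\cdots e_s$. If for some $0\le i\le k-1$ and $0\le j\le l-1$ the edges $p_{2i+1}p_{2i+2}$ and $q_{2j+1}q_{2j+2}$ have a common vertex, then $u$ is even-connected to $z$ or to $w$ with respect to $e_1\cdots e_s$, and $v$ is even-connected to $z$ or to $w$ with respect to $e_1\cdots e_s$.
   Context: Edges are identified with monomials. An even-connection between $u$ and $v$ (possibly equal) with respect to $e_1,\dots,e_s$ is a sequence of vertices $p_0,\dots,p_{2k+1}$, $k\ge1$ (repeats allowed), with (1) $p_0=u$, $p_{2k+1}=v$; (2) for all $0\le l\le k-1$, $p_{2l+1}p_{2l+2}=e_i$ for some $i$; (3) for every $i$, $|\{l\ge0: p_{2l+1}p_{2l+2}=e_i\}|\le|\{j: e_j=e_i\}|$; (4) each $p_rp_{r+1}$, $0\le r\le 2k$, is an edge of $G$. $u,v$ are even-connected if such a sequence exists. *)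

theory Defs
  imports Main
begin

text \<open>A finite simple graph on vertex set V: edges are 2-element subsets of V
  (an edge is identified with the squarefree monomial x_a x_b, i.e. the set {a,b}).\<close>
definition simple_graph :: "'a set \<Rightarrow> 'a set set \<Rightarrow> bool" where
  "simple_graph V E \<longleftrightarrow> finite V \<and> (\<forall>e\<in>E. e \<subseteq> V \<and> card e = 2)"

definition is_even_connection ::
  "'a set set \<Rightarrow> 'a set list \<Rightarrow> 'a \<Rightarrow> 'a \<Rightarrow> 'a list \<Rightarrow> bool" where
  "is_even_connection E es u v ps \<longleftrightarrow>
     (\<exists>k. k \<ge> 1 \<and> length ps = 2 * k + 2 \<and>
        ps ! 0 = u \<and> ps ! (2 * k + 1) = v \<and>
        (\<forall>l<k. {ps ! (2 * l + 1), ps ! (2 * l + 2)} \<in> set es) \<and>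
        (\<forall>e\<in>set es. card {l. l < k \<and> {ps ! (2 * l + 1), ps ! (2 * l + 2)} = e}
                        \<le> count_list es e) \<and>
        (\<forall>r<2 * k + 1. {ps ! r, ps ! (r + 1)} \<in> E))"

definition even_connected :: "'a set set \<Rightarrow> 'a set list \<Rightarrow> 'a \<Rightarrow> 'a \<Rightarrow> bool" where
  "even_connected E es u v \<longleftrightarrow> (\<exists>ps. is_even_connection E es u v ps)"

end

theory Submission
  imports Defs "HOL-Library.Multiset"
begin

(* Among the e-edges of the first connection, take the first one, p_{2i+1}p_{2i+2},
   that touches some e-edge cd of the second. Walk from u along the first connection up to that
   edge, step onto cd, and follow the second connection from there to z or to w, whichever
   direction continues correctly through cd. Minimality of i ensures that the e-edges used
   before the switch are disjoint from those of the second connection, so the multiplicity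
   bound (3) survives the splice. Reversing the first connection gives the claim for v. *)

fun flat_pairs :: "('a \<times> 'a) list \<Rightarrow> 'a list" where
  "flat_pairs [] = []"
| "flat_pairs ((x, y) # P) = x # y # flat_pairs P"

definition pair_edge :: "'a \<times> 'a \<Rightarrow> 'a set" where
  "pair_edge p = {fst p, snd p}"

definition walk_through :: "'a set set \<Rightarrow> 'a \<Rightarrow> ('a \<times> 'a) list \<Rightarrow> 'a \<Rightarrow> bool" where
  "walk_through E u P v \<longleftrightarrow> successively (\<lambda>x y. {x, y} \<in> E) (u # flat_pairs P @ [v])"

(* An even-connection p_0, ..., p_{2k+1} is represented by its ends u, v and the list P of
   pairs (p_{2l+1}, p_{2l+2}); condition (3) becomes multiset inclusion. *)
definition even_walk :: "'a set set \<Rightarrow> 'a set list \<Rightarrow> 'a \<Rightarrow> ('a \<times> 'a) list \<Rightarrow> 'a \<Rightarrow> bool" where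
  "even_walk E es u P v \<longleftrightarrow>
     P \<noteq> [] \<and> walk_through E u P v \<and> mset (map pair_edge P) \<subseteq># mset es"

lemma flat_pairs_append [simp]: "flat_pairs (P @ Q) = flat_pairs P @ flat_pairs Q"
  by (induction P rule: flat_pairs.induct) auto

lemma length_flat_pairs [simp]: "length (flat_pairs P) = 2 * length P"
  by (induction P rule: flat_pairs.induct) auto

lemma rev_flat_pairs: "rev (flat_pairs P) = flat_pairs (map prod.swap (rev P))"
  by (induction P rule: flat_pairs.induct) auto

lemma flat_pairs_surj: "even (length xs) \<Longrightarrow> \<exists>P. flat_pairs P = xs"
proof (induction xs rule: induct_list012)
  case 1
  have "flat_pairs [] = []" by simp
  then show ?case by blast
next
  case (3 x y zs)
  then obtain P where "flat_pairs P = zs" by auto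
  then have "flat_pairs ((x, y) # P) = x # y # zs" by simp
  then show ?case by blast
qed simp

lemma pair_edge_nth_walk:
  assumes "m < length P"
  shows "{(u # flat_pairs P @ [v]) ! (2 * m + 1), (u # flat_pairs P @ [v]) ! (2 * m + 2)}
           = pair_edge (P ! m)"
  using assms
proof (induction P arbitrary: m rule: flat_pairs.induct)
  case (2 x y P)
  then show ?case by (cases m) (auto simp: pair_edge_def nth_append)
qed simp

lemma pair_edge_comp_swap [simp]: "pair_edge \<circ> prod.swap = pair_edge"
  by (auto simp: pair_edge_def)

lemma walk_through_Nil [simp]: "walk_through E u [] v \<longleftrightarrow> {u, v} \<in> E"
  by (simp add: walk_through_def)

lemma walk_through_append:
  "walk_through E u (P @ (x, y) # Q) v \<longleftrightarrow>
     walk_through E u P x \<and> {x, y} \<in> E \<and> walk_through E y Q v"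
proof -
  have split: "u # flat_pairs (P @ (x, y) # Q) @ [v] = (u # flat_pairs P @ [x]) @ (y # flat_pairs Q @ [v])"
    by simp
  show ?thesis
    unfolding walk_through_def split successively_append_iff by auto
qed

lemma walk_through_rev:
  assumes "walk_through E u P v"
  shows "walk_through E v (map prod.swap (rev P)) u"
proof -
  have reversed: "v # flat_pairs (map prod.swap (rev P)) @ [u] = rev (u # flat_pairs P @ [v])"
    by (simp add: rev_flat_pairs)
  show ?thesis
    using assms unfolding walk_through_def reversed successively_rev by (simp add: insert_commute)
qed

lemma even_walk_rev:
  assumes "even_walk E es u P v"
  shows "even_walk E es v (map prod.swap (rev P)) u"
  using assms walk_through_rev by (fastforce simp: even_walk_def)

lemma mset_subseteq_iff_index_count:
  "mset xs \<subseteq># mset ys \<longleftrightarrow>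
     (\<forall>l<length xs. xs ! l \<in> set ys) \<and>
     (\<forall>e\<in>set ys. card {l. l < length xs \<and> xs ! l = e} \<le> count_list ys e)"
proof -
  have count_xs: "count (mset xs) e = card {l. l < length xs \<and> xs ! l = e}" for e
    by (simp add: count_mset count_list_eq_length_filter length_filter_conv_card eq_commute)
  show ?thesis
  proof
    assume sub: "mset xs \<subseteq># mset ys"
    then have "set xs \<subseteq> set ys"
      using mset_subset_eqD by fastforce
    then show "(\<forall>l<length xs. xs ! l \<in> set ys) \<and>
        (\<forall>e\<in>set ys. card {l. l < length xs \<and> xs ! l = e} \<le> count_list ys e)"
      using sub by (auto simp: subseteq_mset_def count_xs count_mset [symmetric])
  next
    assume "(\<forall>l<length xs. xs ! l \<in> set ys) \<and>
        (\<forall>e\<in>set ys. card {l. l < length xs \<and> xs ! l = e} \<le> count_list ys e)"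
    then have in_ys: "\<forall>l<length xs. xs ! l \<in> set ys"
      and card_le: "\<forall>e\<in>set ys. count (mset xs) e \<le> count_list ys e"
      by (simp_all add: count_xs)
    have "count (mset xs) e \<le> count (mset ys) e" for e
    proof (cases "e \<in> set ys")
      case True
      then show ?thesis using card_le by (simp add: count_mset)
    next
      case False
      then have "e \<notin> set xs" using in_ys by (auto simp: in_set_conv_nth)
      then show ?thesis by (metis count_mset_0_iff le0)
    qed
    then show "mset xs \<subseteq># mset ys"
      by (simp add: subseteq_mset_def)
  qed
qed

lemma is_even_connection_shape:
  assumes "is_even_connection E es u v ps"
  shows "\<exists>P. ps = u # flat_pairs P @ [v]"
proof -
  obtain k where len: "length ps = 2 * k + 2" and "ps ! 0 = u" and "ps ! (2 * k + 1) = v"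
    using assms unfolding is_even_connection_def by blast
  obtain x ys where "ps = x # ys"
    using len by (cases ps) auto
  moreover obtain xs y where "ys = xs @ [y]"
    using len \<open>ps = x # ys\<close> by (cases ys rule: rev_cases) auto
  ultimately have ps: "ps = u # xs @ [y]"
    using \<open>ps ! 0 = u\<close> by simp
  with len \<open>ps ! (2 * k + 1) = v\<close> have "y = v" and "length xs = 2 * k"
    by (auto simp: nth_append)
  then obtain P where "flat_pairs P = xs"
    using flat_pairs_surj by (metis dvd_triv_left)
  then show ?thesis
    using ps \<open>y = v\<close> by blast
qed

lemma is_even_connection_iff_even_walk:
  "is_even_connection E es u v (u # flat_pairs P @ [v]) \<longleftrightarrow> even_walk E es u P v"
proof -
  let ?ps = "u # flat_pairs P @ [v]"
  have nth_edge: "l < length P \<Longrightarrow> {?ps ! (2 * l + 1), ?ps ! (2 * l + 2)} = map pair_edge P ! l"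
    for l by (metis pair_edge_nth_walk nth_map)
  have edge_sets: "{l. l < length P \<and> {?ps ! (2 * l + 1), ?ps ! (2 * l + 2)} = e}
      = {l. l < length (map pair_edge P) \<and> map pair_edge P ! l = e}" for e
    using nth_edge by fastforce
  have multiplicities:
    "((\<forall>l<length P. {?ps ! (2 * l + 1), ?ps ! (2 * l + 2)} \<in> set es) \<and>
      (\<forall>e\<in>set es. card {l. l < length P \<and> {?ps ! (2 * l + 1), ?ps ! (2 * l + 2)} = e}
                     \<le> count_list es e))
     \<longleftrightarrow> mset (map pair_edge P) \<subseteq># mset es"
    unfolding mset_subseteq_iff_index_count edge_sets
    using nth_edge by (simp cong: imp_cong del: nth_Cons_Suc)
  have graph_edges: "(\<forall>r<2 * length P + 1. {?ps ! r, ?ps ! (r + 1)} \<in> E) \<longleftrightarrow> walk_through E u P v"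
    unfolding walk_through_def successively_conv_nth by auto
  have "?ps ! (2 * length P + 1) = v"
    by (simp add: nth_append)
  then show ?thesis
    unfolding is_even_connection_def even_walk_def multiplicities [symmetric] graph_edges [symmetric]
    by (auto simp: Suc_le_eq)
qed

lemma even_connected_iff_even_walk:
  "even_connected E es u v \<longleftrightarrow> (\<exists>P. even_walk E es u P v)"
  unfolding even_connected_def
  using is_even_connection_shape is_even_connection_iff_even_walk by metis

lemma mset_take_subseteq: "mset (take n xs) \<subseteq># mset xs"
  by (metis append_take_drop_id mset_append mset_subset_eq_add_left)

lemma mset_drop_subseteq: "mset (drop n xs) \<subseteq># mset xs"
  by (metis append_take_drop_id mset_append mset_subset_eq_add_right)

lemma add_subseteq_mset_if_disjoint:
  assumes "A \<subseteq># C" and "B \<subseteq># C" and "set_mset A \<inter> set_mset B = {}"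
  shows "A + B \<subseteq># C"
  using assms unfolding subseteq_mset_def
  by (metis add.left_neutral add.right_neutral count_eq_zero_iff count_union disjoint_iff)

lemma walk_through_nth_split:
  assumes "walk_through E u P v" and "i < length P" and "P ! i = (a, b)"
  shows "walk_through E u (take i P) a \<and> {a, b} \<in> E \<and> walk_through E b (drop (Suc i) P) v"
proof -
  have "P = take i P @ (a, b) # drop (Suc i) P"
    using assms(2,3) by (metis id_take_nth_drop)
  then show ?thesis
    using assms(1) walk_through_append by metis
qed

lemma walk_through_continue:
  assumes walk: "walk_through E z Q w" and j: "j < length Q" and edge: "pair_edge (Q ! j) = {p, q}"
  shows "\<exists>Q' t. t \<in> {z, w} \<and> {p, q} \<in> E \<and> walk_through E q Q' t \<and>
           mset (map pair_edge ((p, q) # Q')) \<subseteq># mset (map pair_edge Q)"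
proof -
  obtain c d where cd: "Q ! j = (c, d)"
    by fastforce
  from walk_through_nth_split [OF walk j cd]
  have before: "walk_through E z (take j Q) c" and "{c, d} \<in> E"
    and after: "walk_through E d (drop (Suc j) Q) w"
    by auto
  \<comment> \<open>Entering cd at c, continue forward to w; entering at d, go back to z.\<close>
  from edge cd have "(p, q) = (c, d) \<or> (p, q) = (d, c)"
    by (auto simp: pair_edge_def doubleton_eq_iff)
  then show ?thesis
  proof
    assume pq: "(p, q) = (c, d)"
    have "(c, d) # drop (Suc j) Q = drop j Q"
      using j cd by (metis Cons_nth_drop_Suc)
    then have "mset (map pair_edge ((p, q) # drop (Suc j) Q)) \<subseteq># mset (map pair_edge Q)"
      using pq mset_drop_subseteq by (metis drop_map)
    then show ?thesis
      using pq after \<open>{c, d} \<in> E\<close> by blast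
  next
    assume pq: "(p, q) = (d, c)"
    let ?Q' = "map prod.swap (rev (take j Q))"
    have "pair_edge (p, q) = pair_edge (Q ! j)"
      using pq cd by (auto simp: pair_edge_def)
    then have "mset (map pair_edge ((p, q) # ?Q')) = mset (map pair_edge (take (Suc j) Q))"
      using j by (simp add: take_Suc_conv_app_nth)
    then have "mset (map pair_edge ((p, q) # ?Q')) \<subseteq># mset (map pair_edge Q)"
      using mset_take_subseteq by (metis take_map)
    moreover have "walk_through E c ?Q' z"
      using before by (rule walk_through_rev)
    ultimately show ?thesis
      using pq \<open>{c, d} \<in> E\<close> by (intro exI [of _ ?Q'] exI [of _ z]) (auto simp: insert_commute)
  qed
qed

lemma pair_edge_in_edges:
  assumes "walk_through E u P v" and "x \<in> set P"
  shows "pair_edge x \<in> E"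
proof -
  obtain i where "i < length P" and "P ! i = x"
    using assms(2) by (auto simp: in_set_conv_nth)
  then show ?thesis
    using walk_through_nth_split [OF assms(1)] by (cases x) (auto simp: pair_edge_def)
qed

lemma mem_pair_edges_nth:
  assumes "a \<in> \<Union> (set (map pair_edge Q))"
  shows "\<exists>j q. j < length Q \<and> pair_edge (Q ! j) = {a, q}"
proof -
  obtain j where j: "j < length Q" and "a \<in> pair_edge (Q ! j)"
    using assms by (auto simp: in_set_conv_nth)
  then obtain q where "pair_edge (Q ! j) = {a, q}"
    by (cases "Q ! j") (auto simp: pair_edge_def insert_commute)
  then show ?thesis
    using j by blast
qed

lemma even_walk_splice:
  assumes Q: "even_walk E es z Q w" and j: "j < length Q" and edge: "pair_edge (Q ! j) = {p, q}"
    and walk: "walk_through E u P p" and sub: "mset (map pair_edge P) \<subseteq># mset es"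
    and disjoint: "set (map pair_edge P) \<inter> set (map pair_edge Q) = {}"
  shows "even_connected E es u z \<or> even_connected E es u w"
proof -
  obtain Q' t where t: "t \<in> {z, w}" and "{p, q} \<in> E" and "walk_through E q Q' t"
    and sub_Q: "mset (map pair_edge ((p, q) # Q')) \<subseteq># mset (map pair_edge Q)"
    using walk_through_continue [OF _ j edge] Q unfolding even_walk_def by blast
  then have walk_PQ: "walk_through E u (P @ (p, q) # Q') t"
    using walk by (simp add: walk_through_append)
  have sub_es: "mset (map pair_edge ((p, q) # Q')) \<subseteq># mset es"
    using sub_Q Q unfolding even_walk_def by (meson subset_mset.order_trans)
  have "set (map pair_edge ((p, q) # Q')) \<subseteq> set (map pair_edge Q)"
    using set_mset_mono [OF sub_Q] by simp
  then have "set_mset (mset (map pair_edge P)) \<inter> set_mset (mset (map pair_edge ((p, q) # Q'))) = {}"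
    using disjoint unfolding set_mset_mset by blast
  then have "mset (map pair_edge P) + mset (map pair_edge ((p, q) # Q')) \<subseteq># mset es"
    by (rule add_subseteq_mset_if_disjoint [OF sub sub_es])
  then have "even_walk E es u (P @ (p, q) # Q') t"
    using walk_PQ by (simp add: even_walk_def)
  then show ?thesis
    using t unfolding even_connected_iff_even_walk by blast
qed

lemma even_walks_first_contact:
  assumes P: "even_walk E es u P v" and Q: "even_walk E es z Q w" and i: "i < length P"
    and contact: "pair_edge (P ! i) \<inter> \<Union> (set (map pair_edge Q)) \<noteq> {}"
    and no_earlier: "\<forall>m<i. pair_edge (P ! m) \<inter> \<Union> (set (map pair_edge Q)) = {}"
  shows "even_connected E es u z \<or> even_connected E es u w"
proof -
  let ?C = "\<Union> (set (map pair_edge Q))"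
  obtain a b where ab: "P ! i = (a, b)"
    by fastforce
  from walk_through_nth_split [OF _ i ab] P
  have prefix: "walk_through E u (take i P) a" and "{a, b} \<in> E"
    by (auto simp: even_walk_def)
  have sub_prefix: "mset (map pair_edge (take n P)) \<subseteq># mset es" for n
    using P mset_take_subseteq unfolding even_walk_def by (metis subset_mset.order_trans take_map)
  have prefix_off: "set (map pair_edge (take i P)) \<inter> set (map pair_edge Q) = {}"
  proof -
    have "pair_edge (P ! m) \<noteq> f" if "m < i" and "f \<in> set (map pair_edge Q)" for m f
      using no_earlier that by (auto simp: pair_edge_def)
    then show ?thesis
      by (fastforce simp: in_set_conv_nth)
  qed
  show ?thesis
  proof (cases "a \<in> ?C")
    case True
    then obtain j q where "j < length Q" and "pair_edge (Q ! j) = {a, q}"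
      using mem_pair_edges_nth by metis
    then show ?thesis
      using even_walk_splice [OF Q _ _ prefix sub_prefix prefix_off] by blast
  next
    case False
    \<comment> \<open>The walk continues a, b, p, b, ...: the edge bp is used as a graph edge and then as an
      e-edge. Since a is off Q, the e-edge ab is not an e-edge of Q.\<close>
    then have "b \<in> ?C"
      using contact ab by (auto simp: pair_edge_def)
    then obtain j p where j: "j < length Q" and "pair_edge (Q ! j) = {b, p}"
      using mem_pair_edges_nth by metis
    then have edge: "pair_edge (Q ! j) = {p, b}"
      by (simp add: insert_commute)
    have "{b, p} \<in> E"
      using pair_edge_in_edges Q j edge unfolding even_walk_def by (metis insert_commute nth_mem)
    then have "walk_through E u (take (Suc i) P) p"
      using prefix \<open>{a, b} \<in> E\<close> i ab walk_through_append [of E u "take i P" a b "[]" p]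
      by (simp add: take_Suc_conv_app_nth)
    moreover have "set (map pair_edge (take (Suc i) P)) \<inter> set (map pair_edge Q) = {}"
      using prefix_off False i ab by (auto simp: take_Suc_conv_app_nth pair_edge_def)
    ultimately show ?thesis
      using even_walk_splice [OF Q j edge _ sub_prefix] by blast
  qed
qed

lemma even_walks_contact:
  assumes P: "even_walk E es u P v" and Q: "even_walk E es z Q w"
    and contact: "\<exists>e\<in>set (map pair_edge P). e \<inter> \<Union> (set (map pair_edge Q)) \<noteq> {}"
  shows "even_connected E es u z \<or> even_connected E es u w"
proof -
  let ?meets = "\<lambda>i. i < length P \<and> pair_edge (P ! i) \<inter> \<Union> (set (map pair_edge Q)) \<noteq> {}"
  obtain e where "e \<in> set (map pair_edge P)" and e: "e \<inter> \<Union> (set (map pair_edge Q)) \<noteq> {}"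
    using contact by blast
  then obtain i where "i < length P" and "e = pair_edge (P ! i)"
    by (metis in_set_conv_nth length_map nth_map)
  with e have "\<exists>i. ?meets i"
    by blast
  then obtain i where "?meets i" and "\<forall>m<i. \<not> ?meets m"
    using exists_least_iff [of ?meets] by blast
  then show ?thesis
    using even_walks_first_contact [OF P Q] by (meson order.strict_trans)
qed

theorem lemma6p13:
  fixes V :: "'a set" and E :: "'a set set" and es :: "'a set list"
    and ps qs :: "'a list" and u v z w :: 'a and k l i j :: nat
  assumes "simple_graph V E"
    and "length es \<ge> 1" and "set es \<subseteq> E"
    and "is_even_connection E es u v ps" and "length ps = 2 * k + 2"
    and "is_even_connection E es z w qs" and "length qs = 2 * l + 2"
    and "i \<le> k - 1" and "j \<le> l - 1"
    and "{ps ! (2 * i + 1), ps ! (2 * i + 2)} \<inter> {qs ! (2 * j + 1), qs ! (2 * j + 2)} \<noteq> {}"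
  shows "(even_connected E es u z \<or> even_connected E es u w) \<and>
         (even_connected E es v z \<or> even_connected E es v w)"
proof -
  obtain P Q where ps: "ps = u # flat_pairs P @ [v]" and qs: "qs = z # flat_pairs Q @ [w]"
    using is_even_connection_shape assms(4,6) by metis
  have P: "even_walk E es u P v" and Q: "even_walk E es z Q w"
    using assms(4,6) unfolding ps qs is_even_connection_iff_even_walk .
  have "length P = k" and "length Q = l" and "P \<noteq> []" and "Q \<noteq> []"
    using ps qs assms(5,7) P Q by (auto simp: even_walk_def)
  then have i: "i < length P" and j: "j < length Q"
    using assms(8,9) by (auto simp: neq_Nil_conv)
  have "pair_edge (P ! i) \<inter> pair_edge (Q ! j) \<noteq> {}"
    using assms(10) pair_edge_nth_walk [OF i] pair_edge_nth_walk [OF j] ps qs by metis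
  then have contact: "\<exists>e\<in>set (map pair_edge P). e \<inter> \<Union> (set (map pair_edge Q)) \<noteq> {}"
    using i j by (fastforce simp: in_set_conv_nth)
  show ?thesis
    using even_walks_contact [OF P Q contact] even_walks_contact [OF even_walk_rev [OF P] Q] contact
    by simp
qed

end
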